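(* Let $T$ be a bipartite trigraph in $\mathcal F$. Then: (1) $T$ is either complete or has an even pair; (2) if $T$ is favorable, then $T$ has an even pair disjoint from its switchable component.
   Context: A trigraph $T$ consists of a finite set $V(T)$ and a map $\theta:\binom{V(T)}{2}\to\{-1,0,1\}$. Two distinct vertices $u,v$ are strongly adjacent if $\theta(uv)=1$, strongly antiadjacent if $\theta(uv)=-1$, and semiadjacent (a switchable pair) if $\theta(uv)=0$; they are adjacent if $\theta(uv)\in\{0,1\}$ and antiadjacent if $\theta(uv)\in\{0,-1\}$. $N(v)$ is the set of vertices adjacent to $v$. For $X\subseteq V(T)$, $T|X$ is the trigraph on $X$ with $\theta$ restricted, and $T\setminus X=T|(V(T)\setminus X)$. A clique is a set of pairwise adjacent vertices; a strongly stable set is a set of pairwise strongly antiadjacent vertices; $T$ is complete if $V(T)$ is a clique. The full realization of $T$ is the graph on $V(T)$ whose edges are the adjacent pairs. A path is a sequence of distinct vertices $p_1,\dots,p_k$ such that $p_i,p_j$ are adjacent when $|i-j|=1$ and antiadjacent when $|i-j|>1$; its length is $k-1$. A hole of length $k\ge5$ consists of vertices $h_1,\dots,h_k$ with $h_i,h_j$ adjacent if $|i-j|\in\{1,k-1\}$ and antiadjacent otherwise; an antihole is an induced subtrigraph whose complement (adjacency function $-\theta$) is a hole. $T$ is Berge if it contains no hole of odd length and no antihole of odd length. An even pair of $T$ is a strongly antiadjacent pair $\{u,v\}$ such that every path from $u$ to $v$ in $T$ has even length. $\Sigma(T)$ is the graph on $V(T)$ whose edges are the switchable pairs of $T$; a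 switchable component is a connected component of $\Sigma(T)$ with at least two vertices. $\mathcal F$ is the class of Berge trigraphs $T$ such that: (1) $T$ has at most one switchable component, and it has at most two edges; (2) if the switchable component has exactly one edge $xy$, then $N(x)\cap N(y)=\emptyset$ (it is called small); (3) if it has two edges, with $v$ the vertex of degree two in $\Sigma(T)$ and $x,y$ its neighbours, then $v$ is strongly anticomplete to $V(T)\setminus\{v,x,y\}$, $x$ is strongly antiadjacent to $y$, and $N(x)\cap N(y)=\{v\}$ (it is called light). For $T\in\mathcal F$, $D$ denotes the vertex set of its switchable component ($D=\emptyset$ if $T$ has no switchable pair). A pair $\{u,v\}$ is disjoint from the switchable component if $\{u,v\}\cap D=\emptyset$. A trigraph $T\in\mathcal F$ is favorable if (1) $|V(T)|\ge5$; (2) $T$ has a strongly antiadjacent pair $\{u,v\}$ disjoint from $D$; and (3) if $D=\{x,y\}$ is small, then at least one of $V(T)\setminus(D\cup N(x))$, $V(T)\setminus(D\cup N(y))$ is not a clique. $T$ is bipartite if $V(T)$ can be partitioned into two strongly stable sets. *)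

theory Defs
  imports Main
begin

text \<open>A trigraph is a finite vertex set V together with a symmetric map
  theta on pairs of distinct vertices with values in {-1,0,1}.
  (Values of theta on pairs that are not two distinct vertices of V are irrelevant.)\<close>

definition trigraph :: "'a set \<Rightarrow> ('a \<Rightarrow> 'a \<Rightarrow> int) \<Rightarrow> bool" where
  "trigraph V \<theta> \<longleftrightarrow> finite V \<and>
     (\<forall>u\<in>V. \<forall>v\<in>V. u \<noteq> v \<longrightarrow> \<theta> u v = \<theta> v u \<and> \<theta> u v \<in> {-1, 0, 1})"

definition adj :: "('a \<Rightarrow> 'a \<Rightarrow> int) \<Rightarrow> 'a \<Rightarrow> 'a \<Rightarrow> bool" where
  "adj \<theta> u v \<longleftrightarrow> \<theta> u v \<in> {0, 1}"

definition antiadj :: "('a \<Rightarrow> 'a \<Rightarrow> int) \<Rightarrow> 'a \<Rightarrow> 'a \<Rightarrow> bool" where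
  "antiadj \<theta> u v \<longleftrightarrow> \<theta> u v \<in> {0, -1}"

definition nbhd :: "'a set \<Rightarrow> ('a \<Rightarrow> 'a \<Rightarrow> int) \<Rightarrow> 'a \<Rightarrow> 'a set" where
  "nbhd V \<theta> v = {u \<in> V. u \<noteq> v \<and> adj \<theta> v u}"

definition clique :: "('a \<Rightarrow> 'a \<Rightarrow> int) \<Rightarrow> 'a set \<Rightarrow> bool" where
  "clique \<theta> X \<longleftrightarrow> (\<forall>u\<in>X. \<forall>v\<in>X. u \<noteq> v \<longrightarrow> adj \<theta> u v)"

definition strongly_stable :: "('a \<Rightarrow> 'a \<Rightarrow> int) \<Rightarrow> 'a set \<Rightarrow> bool" where
  "strongly_stable \<theta> X \<longleftrightarrow> (\<forall>u\<in>X. \<forall>v\<in>X. u \<noteq> v \<longrightarrow> \<theta> u v = -1)"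

definition complete :: "'a set \<Rightarrow> ('a \<Rightarrow> 'a \<Rightarrow> int) \<Rightarrow> bool" where
  "complete V \<theta> \<longleftrightarrow> clique \<theta> V"

text \<open>A path p_1,...,p_k (k >= 1) given as a list; its length is k - 1.\<close>
definition is_path :: "'a set \<Rightarrow> ('a \<Rightarrow> 'a \<Rightarrow> int) \<Rightarrow> 'a list \<Rightarrow> bool" where
  "is_path V \<theta> p \<longleftrightarrow> p \<noteq> [] \<and> distinct p \<and> set p \<subseteq> V \<and>
     (\<forall>i<length p. \<forall>j<length p.
        (Suc i = j \<longrightarrow> adj \<theta> (p ! i) (p ! j)) \<and>
        (Suc i < j \<longrightarrow> antiadj \<theta> (p ! i) (p ! j)))"

definition is_hole :: "'a set \<Rightarrow> ('a \<Rightarrow> 'a \<Rightarrow> int) \<Rightarrow> 'a list \<Rightarrow> bool" where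
  "is_hole V \<theta> h \<longleftrightarrow> length h \<ge> 5 \<and> distinct h \<and> set h \<subseteq> V \<and>
     (\<forall>i<length h. \<forall>j<length h. i \<noteq> j \<longrightarrow>
        ((Suc i = j \<or> Suc j = i \<or> (i = 0 \<and> j = length h - 1) \<or> (j = 0 \<and> i = length h - 1))
           \<longrightarrow> adj \<theta> (h ! i) (h ! j)) \<and>
        (\<not> (Suc i = j \<or> Suc j = i \<or> (i = 0 \<and> j = length h - 1) \<or> (j = 0 \<and> i = length h - 1))
           \<longrightarrow> antiadj \<theta> (h ! i) (h ! j)))"

text \<open>An antihole is a hole of the complement trigraph (adjacency function -theta).\<close>
definition is_antihole :: "'a set \<Rightarrow> ('a \<Rightarrow> 'a \<Rightarrow> int) \<Rightarrow> 'a list \<Rightarrow> bool" where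
  "is_antihole V \<theta> h \<longleftrightarrow> is_hole V (\<lambda>u v. - \<theta> u v) h"

definition berge :: "'a set \<Rightarrow> ('a \<Rightarrow> 'a \<Rightarrow> int) \<Rightarrow> bool" where
  "berge V \<theta> \<longleftrightarrow> \<not> (\<exists>h. (is_hole V \<theta> h \<or> is_antihole V \<theta> h) \<and> odd (length h))"

definition switchable_pairs :: "'a set \<Rightarrow> ('a \<Rightarrow> 'a \<Rightarrow> int) \<Rightarrow> 'a set set" where
  "switchable_pairs V \<theta> = {{u, v} | u v. u \<in> V \<and> v \<in> V \<and> u \<noteq> v \<and> \<theta> u v = 0}"

text \<open>For T in F (at most one switchable component) this is the vertex set D
  of the switchable component (empty if there is no switchable pair).\<close>
definition switch_comp :: "'a set \<Rightarrow> ('a \<Rightarrow> 'a \<Rightarrow> int) \<Rightarrow> 'a set" where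
  "switch_comp V \<theta> = \<Union> (switchable_pairs V \<theta>)"

definition in_F :: "'a set \<Rightarrow> ('a \<Rightarrow> 'a \<Rightarrow> int) \<Rightarrow> bool" where
  "in_F V \<theta> \<longleftrightarrow> trigraph V \<theta> \<and> berge V \<theta> \<and>
    (switchable_pairs V \<theta> = {} \<or>
     (\<exists>x y. switchable_pairs V \<theta> = {{x, y}} \<and> nbhd V \<theta> x \<inter> nbhd V \<theta> y = {}) \<or>
     (\<exists>v x y. x \<noteq> y \<and> switchable_pairs V \<theta> = {{v, x}, {v, y}} \<and>
        (\<forall>w \<in> V - {v, x, y}. \<theta> v w = -1) \<and> \<theta> x y = -1 \<and>
        nbhd V \<theta> x \<inter> nbhd V \<theta> y = {v}))"

definition even_pair :: "'a set \<Rightarrow> ('a \<Rightarrow> 'a \<Rightarrow> int) \<Rightarrow> 'a \<Rightarrow> 'a \<Rightarrow> bool" where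
  "even_pair V \<theta> u v \<longleftrightarrow> u \<in> V \<and> v \<in> V \<and> u \<noteq> v \<and> \<theta> u v = -1 \<and>
     (\<forall>p. is_path V \<theta> p \<and> hd p = u \<and> last p = v \<longrightarrow> even (length p - 1))"

definition favorable :: "'a set \<Rightarrow> ('a \<Rightarrow> 'a \<Rightarrow> int) \<Rightarrow> bool" where
  "favorable V \<theta> \<longleftrightarrow> in_F V \<theta> \<and> card V \<ge> 5 \<and>
     (\<exists>u\<in>V. \<exists>v\<in>V. u \<noteq> v \<and> \<theta> u v = -1 \<and>
        u \<notin> switch_comp V \<theta> \<and> v \<notin> switch_comp V \<theta>) \<and>
     (\<forall>x y. switchable_pairs V \<theta> = {{x, y}} \<longrightarrow>
        \<not> clique \<theta> (V - ({x, y} \<union> nbhd V \<theta> x)) \<or>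
        \<not> clique \<theta> (V - ({x, y} \<union> nbhd V \<theta> y)))"

definition bipartite :: "'a set \<Rightarrow> ('a \<Rightarrow> 'a \<Rightarrow> int) \<Rightarrow> bool" where
  "bipartite V \<theta> \<longleftrightarrow> (\<exists>A B. A \<union> B = V \<and> A \<inter> B = {} \<and>
     strongly_stable \<theta> A \<and> strongly_stable \<theta> B)"

end

theory Submission
  imports Defs
begin

text \<open>Let (A, B) be a partition of V into strongly stable sets. Every path alternates between
  A and B, so two distinct vertices on the same side form an even pair. A vertex strongly
  antiadjacent to the whole opposite side has no neighbours, so no path leaves it and it forms an
  even pair with every vertex of that side. Hence if no even pair avoids a set X while some
  strongly antiadjacent pair does, then A - X = {a} and B - X = {b}. For (1) take X empty: then
  V = {a, b} with a isolated. For (2) take X = D: now |V| \<ge> 5 forces |D| = 3, so the switchable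
  component is light with a centre v strongly antiadjacent to a and b. The two neighbours of v lie
  on the side opposite v, so the side of v is just v and one of a, b, and the other one of a, b
  is strongly antiadjacent to all of it.\<close>

definition bipartition :: "'a set \<Rightarrow> ('a \<Rightarrow> 'a \<Rightarrow> int) \<Rightarrow> 'a set \<Rightarrow> 'a set \<Rightarrow> bool" where
  "bipartition V \<theta> A B \<longleftrightarrow> A \<union> B = V \<and> A \<inter> B = {} \<and>
     strongly_stable \<theta> A \<and> strongly_stable \<theta> B"

lemma bipartite_iff_bipartition: "bipartite V \<theta> \<longleftrightarrow> (\<exists>A B. bipartition V \<theta> A B)"
  unfolding bipartite_def bipartition_def ..

lemma bipartition_swap: "bipartition V \<theta> A B \<Longrightarrow> bipartition V \<theta> B A"
  unfolding bipartition_def by blast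

lemma trigraph_sym: "trigraph V \<theta> \<Longrightarrow> u \<in> V \<Longrightarrow> v \<in> V \<Longrightarrow> u \<noteq> v \<Longrightarrow> \<theta> u v = \<theta> v u"
  unfolding trigraph_def by blast

lemma bipartition_adj_other_side:
  assumes "bipartition V \<theta> A B" "u \<in> A" "z \<in> V" "z \<noteq> u" "adj \<theta> u z"
  shows "z \<in> B"
  using assms unfolding bipartition_def strongly_stable_def adj_def by force

lemma bipartition_path_alternates:
  assumes AB: "bipartition V \<theta> A B" and p: "is_path V \<theta> p" and hd: "hd p \<in> A"
  shows "i < length p \<Longrightarrow> p ! i \<in> A \<longleftrightarrow> even i"
proof (induction i)
  case 0
  then show ?case using hd p by (simp add: hd_conv_nth is_path_def)
next
  case (Suc i)
  have distinct: "p ! Suc i \<noteq> p ! i"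
    using p Suc.prems by (simp add: is_path_def nth_eq_iff_index_eq)
  have adjacent: "adj \<theta> (p ! i) (p ! Suc i)"
    using p Suc.prems unfolding is_path_def by auto
  have in_V: "p ! i \<in> V" "p ! Suc i \<in> V"
    using p Suc.prems unfolding is_path_def by (meson Suc_lessD nth_mem subsetD)+
  have "p ! i \<in> A \<Longrightarrow> p ! Suc i \<in> B" "p ! i \<in> B \<Longrightarrow> p ! Suc i \<in> A"
    using bipartition_adj_other_side[OF AB _ in_V(2) distinct adjacent]
      bipartition_adj_other_side[OF bipartition_swap[OF AB] _ in_V(2) distinct adjacent]
    by blast+
  then have "p ! Suc i \<in> A \<longleftrightarrow> p ! i \<notin> A"
    using AB in_V unfolding bipartition_def by blast
  then show ?case using Suc by simp
qed

lemma even_pair_same_side: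
  assumes AB: "bipartition V \<theta> A B" and "u \<in> A" "v \<in> A" "u \<noteq> v"
  shows "even_pair V \<theta> u v"
  unfolding even_pair_def
proof (intro conjI allI impI)
  show "u \<in> V" "v \<in> V" "u \<noteq> v" "\<theta> u v = -1"
    using assms unfolding bipartition_def strongly_stable_def by auto
  fix p assume p: "is_path V \<theta> p \<and> hd p = u \<and> last p = v"
  then have "p \<noteq> []" by (simp add: is_path_def)
  then have "p ! (length p - 1) = v" using p by (simp add: last_conv_nth)
  then show "even (length p - 1)"
    using bipartition_path_alternates[OF AB, of p "length p - 1"] p \<open>p \<noteq> []\<close> assms by simp
qed

lemma is_path_from_isolated:
  assumes p: "is_path V \<theta> p" and isolated: "\<forall>z\<in>V. z \<noteq> hd p \<longrightarrow> \<not> adj \<theta> (hd p) z"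
  shows "p = [hd p]"
proof (rule ccontr)
  assume "p \<noteq> [hd p]"
  moreover have "p \<noteq> []" using p by (simp add: is_path_def)
  ultimately obtain a b q where abq: "p = a # b # q"
    by (metis list.exhaust list.sel(1))
  have "\<forall>i<length p. \<forall>j<length p. Suc i = j \<longrightarrow> adj \<theta> (p ! i) (p ! j)"
    using p unfolding is_path_def by blast
  then have "adj \<theta> a b"
    using abq by (metis One_nat_def Suc_less_eq length_Cons nth_Cons_0 nth_Cons_Suc zero_less_Suc)
  have "b \<in> V" "b \<noteq> a"
    using p unfolding abq is_path_def by auto
  then show False using isolated abq \<open>adj \<theta> a b\<close> by simp
qed

lemma even_pair_isolated:
  assumes "u \<in> V" "v \<in> V" "u \<noteq> v" "\<theta> u v = -1"
    and isolated: "\<forall>z\<in>V. z \<noteq> u \<longrightarrow> \<not> adj \<theta> u z"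
  shows "even_pair V \<theta> u v"
  unfolding even_pair_def
proof (intro conjI allI impI)
  fix p assume p: "is_path V \<theta> p \<and> hd p = u \<and> last p = v"
  then have "p = [u]"
    using is_path_from_isolated[of V \<theta> p] isolated by simp
  then show "even (length p - 1)"
    using p \<open>u \<noteq> v\<close> by simp
qed (use assms in simp_all)

lemma even_pair_anticomplete_side:
  assumes AB: "bipartition V \<theta> A B" and "u \<in> A" "w \<in> B"
    and anticomplete: "\<forall>z\<in>B. \<theta> u z = -1"
  shows "even_pair V \<theta> u w"
proof (rule even_pair_isolated)
  show "\<forall>z\<in>V. z \<noteq> u \<longrightarrow> \<not> adj \<theta> u z"
  proof (intro ballI impI notI)
    fix z assume "z \<in> V" "z \<noteq> u" "adj \<theta> u z"
    then have "z \<in> B" by (rule bipartition_adj_other_side[OF AB \<open>u \<in> A\<close>])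
    then show False using anticomplete \<open>adj \<theta> u z\<close> by (simp add: adj_def)
  qed
  show "u \<in> V" "w \<in> V" "u \<noteq> w"
    using assms unfolding bipartition_def by blast+
  show "\<theta> u w = -1"
    using anticomplete \<open>w \<in> B\<close> by blast
qed

lemma bipartition_unique_outside_if_no_even_pair:
  assumes "bipartition V \<theta> A B"
    and "\<nexists>u v. even_pair V \<theta> u v \<and> u \<notin> X \<and> v \<notin> X"
    and "a \<in> A - X" "b \<in> A - X"
  shows "a = b"
proof (rule ccontr)
  assume "a \<noteq> b"
  then have "even_pair V \<theta> a b" using even_pair_same_side[OF assms(1)] assms(3,4) by blast
  then show False using assms(2-4) by blast
qed

lemma bipartition_singletons_outside_if_no_even_pair:
  assumes T: "trigraph V \<theta>" and AB: "bipartition V \<theta> A B"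
    and none: "\<nexists>u v. even_pair V \<theta> u v \<and> u \<notin> X \<and> v \<notin> X"
    and uw: "u \<in> V - X" "w \<in> V - X" "u \<noteq> w" "\<theta> u w = -1"
  obtains a b where "A - X = {a}" "B - X = {b}" "\<theta> a b = -1" "\<theta> b a = -1"
proof -
  note unique_A = bipartition_unique_outside_if_no_even_pair[OF AB none]
  note unique_B = bipartition_unique_outside_if_no_even_pair[OF bipartition_swap[OF AB] none]
  have sides: "z \<in> A \<longleftrightarrow> z \<notin> B" if "z \<in> V" for z
    using AB that unfolding bipartition_def by blast
  have "\<theta> w u = -1" using trigraph_sym[OF T, of u w] uw by auto
  show thesis
  proof (cases "u \<in> A")
    case True
    then have "w \<in> B" using unique_A uw sides by blast
    then have "A - X = {u}" "B - X = {w}" using True uw unique_A unique_B by blast+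
    then show thesis using that uw \<open>\<theta> w u = -1\<close> by blast
  next
    case False
    then have "w \<in> A" using unique_B uw sides by blast
    then have "A - X = {w}" "B - X = {u}" using False uw sides unique_A unique_B by blast+
    then show thesis using that uw \<open>\<theta> w u = -1\<close> by blast
  qed
qed

lemma bipartite_complete_or_even_pair:
  assumes T: "trigraph V \<theta>" and "bipartite V \<theta>"
  shows "complete V \<theta> \<or> (\<exists>u v. even_pair V \<theta> u v)"
proof (rule disjCI)
  obtain A B where AB: "bipartition V \<theta> A B"
    using \<open>bipartite V \<theta>\<close> bipartite_iff_bipartition by blast
  assume "\<not> (\<exists>u v. even_pair V \<theta> u v)"
  then have none: "\<nexists>u v. even_pair V \<theta> u v \<and> u \<notin> {} \<and> v \<notin> {}" by simp
  show "complete V \<theta>"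
    unfolding complete_def clique_def
  proof (intro ballI impI)
    fix u v assume uv: "u \<in> V" "v \<in> V" "u \<noteq> v"
    show "adj \<theta> u v"
    proof (rule ccontr)
      assume "\<not> adj \<theta> u v"
      then have "\<theta> u v = -1" using T uv unfolding trigraph_def adj_def by auto
      moreover have "u \<in> V - {}" "v \<in> V - {}" using uv by simp_all
      ultimately obtain a b where "A - {} = {a}" "B - {} = {b}" "\<theta> a b = -1"
        using bipartition_singletons_outside_if_no_even_pair[OF T AB none _ _ \<open>u \<noteq> v\<close>] by metis
      then have "even_pair V \<theta> a b" by (intro even_pair_anticomplete_side[OF AB]) auto
      then show False using none by blast
    qed
  qed
qed

lemma switchable_pairsD:
  assumes T: "trigraph V \<theta>" and "{a, b} \<in> switchable_pairs V \<theta>"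
  shows "a \<in> V" "b \<in> V" "a \<noteq> b" "\<theta> a b = 0"
proof -
  obtain c d where cd: "{a, b} = {c, d}" "c \<in> V" "d \<in> V" "c \<noteq> d" "\<theta> c d = 0"
    using assms(2) unfolding switchable_pairs_def by blast
  moreover have "\<theta> d c = 0" using trigraph_sym[OF T] cd by metis
  ultimately show "a \<in> V" "b \<in> V" "a \<noteq> b" "\<theta> a b = 0"
    by (auto simp: doubleton_eq_iff)
qed

lemma switch_comp_subset: "switch_comp V \<theta> \<subseteq> V"
  unfolding switch_comp_def switchable_pairs_def by auto

lemma in_F_switch_comp_cases:
  assumes F: "in_F V \<theta>"
  obtains "card (switch_comp V \<theta>) \<le> 2"
  | v x y where "switch_comp V \<theta> = {v, x, y}" "v \<noteq> x" "v \<noteq> y" "\<theta> v x = 0" "\<theta> v y = 0"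
      "\<forall>z \<in> V - {v, x, y}. \<theta> v z = -1"
proof -
  have T: "trigraph V \<theta>" using F by (simp add: in_F_def)
  consider (none) "switchable_pairs V \<theta> = {}"
    | (small) x y where "switchable_pairs V \<theta> = {{x, y}}"
    | (light) v x y where "switchable_pairs V \<theta> = {{v, x}, {v, y}}"
        "\<forall>z \<in> V - {v, x, y}. \<theta> v z = -1"
    using F unfolding in_F_def by (elim conjE disjE exE) auto
  then show thesis
  proof cases
    case none
    then show thesis using that(1) by (simp add: switch_comp_def)
  next
    case (small x y)
    then have "card (switch_comp V \<theta>) \<le> 2" by (simp add: switch_comp_def card_insert_if)
    then show thesis by (rule that(1))
  next
    case (light v x y)
    then have "switch_comp V \<theta> = {v, x, y}" by (auto simp: switch_comp_def)
    moreover have "v \<noteq> x" "\<theta> v x = 0" "v \<noteq> y" "\<theta> v y = 0"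
      using switchable_pairsD[OF T, of v x] switchable_pairsD[OF T, of v y] light(1) by auto
    ultimately show thesis using that(2) light(2) by blast
  qed
qed

lemma card_le_if_Diff_subset_doubleton:
  assumes "V - X \<subseteq> {a, b}" and "finite X"
  shows "card V \<le> card X + 2"
proof -
  have "V \<subseteq> X \<union> {a, b}" using assms(1) by blast
  then have "card V \<le> card (X \<union> {a, b})" using assms(2) by (simp add: card_mono)
  also have "\<dots> \<le> card X + card {a, b}" by (rule card_Un_le)
  also have "\<dots> \<le> card X + 2" by (simp add: card_insert_if)
  finally show ?thesis .
qed

lemma even_pair_light_component:
  assumes AB: "bipartition V \<theta> A B" and a: "a \<in> A"
    and B: "B - {v, x, y} = {b}" and v: "v \<in> B"
    and "v \<noteq> x" "\<theta> v x = 0" "v \<noteq> y" "\<theta> v y = 0"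
    and "\<theta> a b = -1" "\<theta> a v = -1"
  shows "even_pair V \<theta> a b"
proof (rule even_pair_anticomplete_side[OF AB a])
  show "b \<in> B" using B by blast
  have "x \<notin> B" "y \<notin> B"
    using AB v assms(5-8) unfolding bipartition_def strongly_stable_def by force+
  then have "B \<subseteq> {b, v}" using B by blast
  then show "\<forall>z\<in>B. \<theta> a z = -1" using assms(9,10) by blast
qed

lemma favorable_bipartite_even_pair_outside_switch_comp:
  assumes fav: "favorable V \<theta>" and "bipartite V \<theta>"
  shows "\<exists>u v. even_pair V \<theta> u v \<and> u \<notin> switch_comp V \<theta> \<and> v \<notin> switch_comp V \<theta>"
proof (rule ccontr)
  define D where "D = switch_comp V \<theta>"
  assume "\<not> ?thesis"
  then have none: "\<nexists>u v. even_pair V \<theta> u v \<and> u \<notin> D \<and> v \<notin> D" unfolding D_def .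
  have F: "in_F V \<theta>" and T: "trigraph V \<theta>" and "5 \<le> card V"
    using fav unfolding favorable_def in_F_def by blast+
  obtain A B where AB: "bipartition V \<theta> A B"
    using \<open>bipartite V \<theta>\<close> bipartite_iff_bipartition by blast
  obtain u w where "u \<in> V - D" "w \<in> V - D" "u \<noteq> w" "\<theta> u w = -1"
    using fav unfolding favorable_def D_def by blast
  then obtain a b where A: "A - D = {a}" and B: "B - D = {b}" and "\<theta> a b = -1" "\<theta> b a = -1"
    using bipartition_singletons_outside_if_no_even_pair[OF T AB none] by metis
  have "V - D \<subseteq> {a, b}" using AB A B unfolding bipartition_def by blast
  moreover have "finite D"
    using T finite_subset[OF switch_comp_subset] unfolding trigraph_def D_def by blast
  ultimately have "card V \<le> card D + 2" by (rule card_le_if_Diff_subset_doubleton)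
  then have "\<not> card D \<le> 2" using \<open>5 \<le> card V\<close> by linarith
  then obtain v x y where D: "D = {v, x, y}"
    and light: "v \<noteq> x" "\<theta> v x = 0" "v \<noteq> y" "\<theta> v y = 0"
    and v_anticomplete: "\<forall>z \<in> V - {v, x, y}. \<theta> v z = -1"
    using in_F_switch_comp_cases[OF F] unfolding D_def by metis
  have "v \<in> V" using D switch_comp_subset[of V \<theta>] unfolding D_def by blast
  have "a \<in> V - {v, x, y}" "b \<in> V - {v, x, y}"
    using A B AB D unfolding bipartition_def by blast+
  then have "\<theta> a v = -1" "\<theta> b v = -1"
    using \<open>v \<in> V\<close> v_anticomplete trigraph_sym[OF T] by (metis DiffE insertCI)+
  consider "v \<in> B" | "v \<in> A" using AB \<open>v \<in> V\<close> unfolding bipartition_def by blast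
  then show False
  proof cases
    case 1
    have "even_pair V \<theta> a b"
      using even_pair_light_component[OF AB _ B[unfolded D] 1 light] A
        \<open>\<theta> a b = -1\<close> \<open>\<theta> a v = -1\<close> by blast
    then show False using none A B by blast
  next
    case 2
    have "even_pair V \<theta> b a"
      using even_pair_light_component[OF bipartition_swap[OF AB] _ A[unfolded D] 2 light] B
        \<open>\<theta> b a = -1\<close> \<open>\<theta> b v = -1\<close> by blast
    then show False using none A B by blast
  qed
qed

theorem theorem4p2:
  fixes V :: "'a set" and \<theta> :: "'a \<Rightarrow> 'a \<Rightarrow> int"
  assumes "in_F V \<theta>" and "bipartite V \<theta>"
  shows "(complete V \<theta> \<or> (\<exists>u v. even_pair V \<theta> u v)) \<and>
         (favorable V \<theta> \<longrightarrow>
            (\<exists>u v. even_pair V \<theta> u v \<and> u \<notin> switch_comp V \<theta> \<and> v \<notin> switch_comp V \<theta>))"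
proof -
  have "trigraph V \<theta>" using \<open>in_F V \<theta>\<close> by (simp add: in_F_def)
  then show ?thesis
    using bipartite_complete_or_even_pair favorable_bipartite_even_pair_outside_switch_comp
      \<open>bipartite V \<theta>\<close>
    by blast
qed

end
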